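(* Let $U\subset\mathbb{R}^2$ be open and let $f=u+iv$ be a holomorphic function of $\xi+i\eta$ on $U$ ($u,v$ real). Then the function $$F(x)=u(x_0,|\vec x|)+\frac{\vec x}{|\vec x|}\,v(x_0,|\vec x|),$$ defined for paravectors $x=x_0+\vec x$ with $\vec x\neq0$ and $(x_0,|\vec x|)\in U$, is holomorphic Cliffordian.
   Context: $\mathbb{R}_{0,3}$ is the real Clifford algebra generated by $e_1,e_2,e_3$ with $e_ie_j+e_je_i=-2\delta_{ij}$; $e_0=1$. A paravector is $x=x_0+\vec x$ with $\vec x=x_1e_1+x_2e_2+x_3e_3$, $|\vec x|=(x_1^2+x_2^2+x_3^2)^{1/2}$; paravectors are identified with $\mathbb{R}^4$. With $D=\sum_{i=0}^3 e_i\partial/\partial x_i$ and $\Delta=\sum_{i=0}^3\partial^2/\partial x_i^2$, a function is holomorphic Cliffordian if $D\Delta F=0$. *)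

theory Defs
  imports "HOL-Analysis.Analysis"
begin

text \<open>Paravectors x = x0 + x1 e1 + x2 e2 + x3 e3 are identified with real^4;
  coordinate i (i = 0..3) is xc x i.\<close>

definition xc :: "real^4 \<Rightarrow> nat \<Rightarrow> real" where
  "xc x i = x $ (of_nat i :: 4)"

definition unit4 :: "nat \<Rightarrow> real^4" where
  "unit4 i = axis (of_nat i :: 4) 1"

definition vnorm :: "real^4 \<Rightarrow> real" where
  "vnorm x = sqrt ((xc x 1)\<^sup>2 + (xc x 2)\<^sup>2 + (xc x 3)\<^sup>2)"

text \<open>Elements of the Clifford algebra R_{0,3}: coefficient functions on the
  basis blades e_A, A \<subseteq> {1,2,3} (values outside Pow {1,2,3} are ignored).\<close>
type_synonym mv = "nat set \<Rightarrow> real"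

definition blades :: "nat set set" where
  "blades = Pow {1,2,3}"

text \<open>Sign in e_A e_B = bsign A B e_{A \<triangle> B}, with e_i e_j + e_j e_i = -2 delta_ij.\<close>
definition bsign :: "nat set \<Rightarrow> nat set \<Rightarrow> real" where
  "bsign A B = (-1) ^ card {(a, b). a \<in> A \<and> b \<in> B \<and> b < a} * (-1) ^ card (A \<inter> B)"

definition clmul :: "mv \<Rightarrow> mv \<Rightarrow> mv" where
  "clmul p q = (\<lambda>C. \<Sum>A\<in>blades. \<Sum>B\<in>blades.
      if (A - B) \<union> (B - A) = C then bsign A B * p A * q B else 0)"

definition bset :: "nat \<Rightarrow> nat set" where
  "bset i = (if i = 0 then {} else {i})"

definition ebasis :: "nat \<Rightarrow> mv" where
  "ebasis i = (\<lambda>A. if A = bset i then 1 else 0)"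

definition para :: "real^4 \<Rightarrow> mv" where
  "para p = (\<lambda>A. \<Sum>i<4. xc p i * ebasis i A)"

definition pd :: "nat \<Rightarrow> (real^4 \<Rightarrow> real) \<Rightarrow> real^4 \<Rightarrow> real" where
  "pd i g x = deriv (\<lambda>t. g (x + t *\<^sub>R unit4 i)) 0"

definition lap :: "(real^4 \<Rightarrow> mv) \<Rightarrow> real^4 \<Rightarrow> mv" where
  "lap F x = (\<lambda>A. \<Sum>i<4. pd i (pd i (\<lambda>y. F y A)) x)"

definition Dop :: "(real^4 \<Rightarrow> mv) \<Rightarrow> real^4 \<Rightarrow> mv" where
  "Dop F x = (\<lambda>C. \<Sum>i<4. clmul (ebasis i) (\<lambda>A. pd i (\<lambda>y. F y A) x) C)"

definition diff3_on :: "(real^4 \<Rightarrow> real) \<Rightarrow> (real^4) set \<Rightarrow> bool" where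
  "diff3_on g S \<longleftrightarrow> g differentiable_on S \<and>
     (\<forall>i<4. pd i g differentiable_on S) \<and>
     (\<forall>i<4. \<forall>j<4. pd j (pd i g) differentiable_on S)"

definition holomorphic_cliffordian :: "(real^4 \<Rightarrow> mv) \<Rightarrow> (real^4) set \<Rightarrow> bool" where
  "holomorphic_cliffordian F S \<longleftrightarrow>
     (\<forall>A\<in>blades. diff3_on (\<lambda>y. F y A) S) \<and>
     (\<forall>x\<in>S. \<forall>C\<in>blades. Dop (lap F) x C = 0)"

end

theory Submission
  imports Defs "HOL-Complex_Analysis.Cauchy_Integral_Formula"
begin

text \<open>
  Write \<open>r = |x|\<close> for the norm of the vector part. All partial derivatives of \<open>F = u + (x/r) v\<close>
  are polynomials in the coordinates \<open>x\<^sub>i\<close>, in \<open>1/r\<close> and in the real and imaginary parts of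
  the higher derivatives of \<open>f\<close> at \<open>x\<^sub>0 + i r\<close>, because by the Cauchy-Riemann equations
  \<open>\<partial>\<^sub>j g(x\<^sub>0 + i r) = (x\<^sub>j / r) i g'(x\<^sub>0 + i r)\<close> for \<open>j = 1, 2, 3\<close>. Representing such
  expressions by terms with a symbolic partial derivative turns the computation of \<open>\<Delta>F\<close> and
  \<open>D\<Delta>F\<close> into polynomial identities modulo \<open>(1/r)\<^sup>2 (x\<^sub>1\<^sup>2 + x\<^sub>2\<^sup>2 + x\<^sub>3\<^sup>2) = 1\<close>.
  Since \<open>u\<close> and \<open>v\<close> are harmonic, \<open>\<Delta>F = a + x b\<close> with \<open>a = -2 Im f' / r\<close> and
  \<open>b = 2 (Re f' / r\<^sup>2 - Im f / r\<^sup>3)\<close>, and the scalar part \<open>\<partial>\<^sub>0 a - \<Sum>\<^sub>j \<partial>\<^sub>j (x\<^sub>j b)\<close>, the vector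
  parts \<open>\<partial>\<^sub>k a + \<partial>\<^sub>0 (x\<^sub>k b)\<close> and the bivector parts \<open>\<partial>\<^sub>k (x\<^sub>l b) - \<partial>\<^sub>l (x\<^sub>k b)\<close> of
  \<open>D (a + x b)\<close> all vanish.
\<close>

lemma sum_lessThan_4: "(\<Sum>i<(4::nat). g i) = g 0 + g 1 + g 2 + (g 3 :: 'a::comm_monoid_add)"
  by (simp add: eval_nat_numeral ac_simps)

lemma xc_has_derivative [derivative_intros]: "((\<lambda>x. xc x k) has_derivative (\<lambda>h. xc h k)) F"
  unfolding xc_def by (rule bounded_linear_imp_has_derivative[OF bounded_linear_vec_nth])

lemma xc_unit4: "i < 4 \<Longrightarrow> k < 4 \<Longrightarrow> xc (unit4 i) k = (if i = k then 1 else 0)"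
  by (auto simp: xc_def unit4_def axis_def less_Suc_eq numeral_eq_Suc)

lemma pd_eq_has_derivative:
  assumes "(g has_derivative L) (at x)"
  shows "pd i g x = L (unit4 i)"
proof -
  have L_scale: "L (t *\<^sub>R unit4 i) = L (unit4 i) * t" for t
    using linear_scale[OF has_derivative_linear[OF assms]] by simp
  have "((\<lambda>t. x + t *\<^sub>R unit4 i) has_derivative (\<lambda>t. t *\<^sub>R unit4 i)) (at 0)"
    by (auto intro!: derivative_eq_intros)
  moreover have "(g has_derivative L) (at (x + 0 *\<^sub>R unit4 i))"
    using assms by simp
  ultimately have "((\<lambda>t. g (x + t *\<^sub>R unit4 i)) has_derivative (\<lambda>t. L (t *\<^sub>R unit4 i))) (at 0)"
    by (rule has_derivative_compose)
  then have "((\<lambda>t. g (x + t *\<^sub>R unit4 i)) has_real_derivative L (unit4 i)) (at 0)"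
    unfolding has_field_derivative_def L_scale .
  then show ?thesis
    unfolding pd_def by (rule DERIV_imp_deriv)
qed

lemma pd_const [simp]: "pd i (\<lambda>y. c) = (\<lambda>x. 0)"
  by (simp add: pd_def fun_eq_iff)

lemma blades_eq: "blades = {{}, {1}, {2}, {3}, {1, 2}, {1, 3}, {2, 3}, {1, 2, 3}}"
  unfolding blades_def by (simp add: Pow_insert insert_commute)

lemma bsign_empty_left: "bsign {} B = 1"
  by (simp add: bsign_def)

lemma bsign_empty_right: "bsign A {} = 1"
  by (simp add: bsign_def)

lemma bsign_singletons: "bsign {k} {l} = (if l < k \<or> k = l then -1 else 1)"
proof -
  have "{(a, b). a = k \<and> b = l \<and> b < a} = (if l < k then {(k, l)} else {})"
    by auto
  then show ?thesis
    by (simp add: bsign_def)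
qed

lemma clmul_ebasis:
  assumes "i < 4" "C \<in> blades"
  shows "clmul (ebasis i) q C = bsign (bset i) (sym_diff C (bset i)) * q (sym_diff C (bset i))"
proof -
  have fin: "finite blades" and bi: "bset i \<in> blades" and sd: "sym_diff C (bset i) \<in> blades"
    using assms by (auto simp: blades_def bset_def)
  have "(if sym_diff A B = C then bsign A B * ebasis i A * q B else 0)
      = (if A = bset i then (if B = sym_diff C (bset i) then bsign A B * q B else 0) else 0)" for A B
    by (auto simp: ebasis_def)
  then have "clmul (ebasis i) q C = (\<Sum>A\<in>blades. if A = bset i then
      (\<Sum>B\<in>blades. if B = sym_diff C (bset i) then bsign A B * q B else 0) else 0)"
    unfolding clmul_def by (intro sum.cong refl) simp
  then show ?thesis
    using fin bi sd by simp
qed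

lemma Dop_eq_sum:
  "C \<in> blades \<Longrightarrow>
   Dop G x C = (\<Sum>i<4. bsign (bset i) (sym_diff C (bset i)) * pd i (\<lambda>y. G y (sym_diff C (bset i))) x)"
  by (simp add: Dop_def clmul_ebasis)

lemma
  assumes "\<And>y A. A \<in> blades \<Longrightarrow> 2 \<le> card A \<Longrightarrow> G y A = 0"
  shows Dop_paravector_scalar:
      "Dop G x {} = pd 0 (\<lambda>y. G y {}) x - (\<Sum>j\<in>{1, 2, 3}. pd j (\<lambda>y. G y {j}) x)"
    and Dop_paravector_vector:
      "k \<in> {1, 2, 3} \<Longrightarrow> Dop G x {k} = pd 0 (\<lambda>y. G y {k}) x + pd k (\<lambda>y. G y {}) x"
    and Dop_paravector_bivector:
      "k \<in> {1, 2, 3} \<Longrightarrow> l \<in> {1, 2, 3} \<Longrightarrow> k < l \<Longrightarrow>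
       Dop G x {k, l} = pd k (\<lambda>y. G y {l}) x - pd l (\<lambda>y. G y {k}) x"
    and Dop_paravector_trivector:
      "Dop G x {1, 2, 3} = 0"
proof -
  have pd_zero: "pd i (\<lambda>y. G y A) x = 0" if "A \<in> blades" "2 \<le> card A" for i A
    using assms[OF that] by simp
  note Dop_simps = Dop_eq_sum bset_def blades_def sum_lessThan_4 pd_zero insert_Diff_if
    bsign_empty_left bsign_empty_right bsign_singletons
  show "Dop G x {} = pd 0 (\<lambda>y. G y {}) x - (\<Sum>j\<in>{1, 2, 3}. pd j (\<lambda>y. G y {j}) x)"
    by (simp add: Dop_simps)
  show "k \<in> {1, 2, 3} \<Longrightarrow> Dop G x {k} = pd 0 (\<lambda>y. G y {k}) x + pd k (\<lambda>y. G y {}) x"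
    by (auto simp: Dop_simps)
  show "k \<in> {1, 2, 3} \<Longrightarrow> l \<in> {1, 2, 3} \<Longrightarrow> k < l \<Longrightarrow>
       Dop G x {k, l} = pd k (\<lambda>y. G y {l}) x - pd l (\<lambda>y. G y {k}) x"
    by (auto simp: Dop_simps)
  show "Dop G x {1, 2, 3} = 0"
    by (simp add: Dop_simps)
qed

definition vinner :: "real^4 \<Rightarrow> real^4 \<Rightarrow> real" where
  "vinner x y = xc x 1 * xc y 1 + xc x 2 * xc y 2 + xc x 3 * xc y 3"

lemma vnorm_square: "(vnorm x)\<^sup>2 = (xc x 1)\<^sup>2 + (xc x 2)\<^sup>2 + (xc x 3)\<^sup>2"
  by (simp add: vnorm_def)

lemma vnorm_has_derivative:
  assumes "vnorm x \<noteq> 0"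
  shows "(vnorm has_derivative (\<lambda>h. vinner x h / vnorm x)) (at x)"
proof -
  have "0 < (xc x 1)\<^sup>2 + (xc x 2)\<^sup>2 + (xc x 3)\<^sup>2"
    using assms unfolding vnorm_def
    by (metis add_nonneg_nonneg order_le_less real_sqrt_zero zero_le_power2)
  then show ?thesis
    unfolding vnorm_def[abs_def] vinner_def
    by (auto intro!: derivative_eq_intros simp: field_simps)
qed

lemma inverse_vnorm_has_derivative:
  assumes "vnorm x \<noteq> 0"
  shows "((\<lambda>y. 1 / vnorm y) has_derivative (\<lambda>h. - vinner x h / vnorm x ^ 3)) (at x)"
  using Deriv.has_derivative_inverse[OF assms vnorm_has_derivative[OF assms]] assms
  by (auto simp: inverse_eq_divide power3_eq_cube intro: has_derivative_eq_rhs)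

lemma continuous_on_vnorm: "continuous_on A vnorm"
  unfolding vnorm_def[abs_def] xc_def by (intro continuous_intros)

definition radial_complex :: "real^4 \<Rightarrow> complex" where
  "radial_complex x = Complex (xc x 0) (vnorm x)"

lemma radial_complex_has_derivative:
  assumes "vnorm x \<noteq> 0"
  shows "(radial_complex has_derivative (\<lambda>h. Complex (xc h 0) (vinner x h / vnorm x))) (at x)"
  unfolding radial_complex_def[abs_def] Complex_eq
  by (auto intro!: derivative_eq_intros vnorm_has_derivative assms)

definition radial_domain :: "complex set \<Rightarrow> (real^4) set" where
  "radial_domain U = {x. vnorm x \<noteq> 0 \<and> radial_complex x \<in> U}"

lemma open_radial_domain:
  assumes "open U"
  shows "open (radial_domain U)"
proof -
  have "continuous_on UNIV radial_complex"
    unfolding radial_complex_def[abs_def] Complex_eq xc_def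
    using continuous_on_vnorm by (intro continuous_intros) auto
  then have "open (radial_complex -` U)"
    by (rule open_vimage[OF assms])
  moreover have "open (vnorm -` (- {0}))"
    by (rule open_vimage[OF _ continuous_on_vnorm]) auto
  moreover have "radial_domain U = vnorm -` (- {0}) \<inter> radial_complex -` U"
    by (auto simp: radial_domain_def)
  ultimately show ?thesis
    by auto
qed

datatype rterm =
    TConst real | TCoord nat | TInvNorm | TRe nat | TIm nat
  | TAdd rterm rterm | TMul rterm rterm

fun rterm_eval :: "(complex \<Rightarrow> complex) \<Rightarrow> rterm \<Rightarrow> real^4 \<Rightarrow> real" where
  "rterm_eval f (TConst c) x = c"
| "rterm_eval f (TCoord k) x = (if k < 4 then xc x k else 0)"  (* xc x k wraps around modulo 4 *)
| "rterm_eval f TInvNorm x = 1 / vnorm x"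
| "rterm_eval f (TRe n) x = Re ((deriv ^^ n) f (radial_complex x))"
| "rterm_eval f (TIm n) x = Im ((deriv ^^ n) f (radial_complex x))"
| "rterm_eval f (TAdd a b) x = rterm_eval f a x + rterm_eval f b x"
| "rterm_eval f (TMul a b) x = rterm_eval f a x * rterm_eval f b x"

fun rterm_pd :: "nat \<Rightarrow> rterm \<Rightarrow> rterm" where
  "rterm_pd i (TConst c) = TConst 0"
| "rterm_pd i (TCoord k) = TConst (if i = k then 1 else 0)"
| "rterm_pd i TInvNorm =
     (if i = 0 then TConst 0
      else TMul (TConst (-1)) (TMul (TCoord i) (TMul TInvNorm (TMul TInvNorm TInvNorm))))"
| "rterm_pd i (TRe n) =
     (if i = 0 then TRe (Suc n)
      else TMul (TConst (-1)) (TMul (TCoord i) (TMul TInvNorm (TIm (Suc n)))))"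
| "rterm_pd i (TIm n) =
     (if i = 0 then TIm (Suc n)
      else TMul (TCoord i) (TMul TInvNorm (TRe (Suc n))))"
| "rterm_pd i (TAdd a b) = TAdd (rterm_pd i a) (rterm_pd i b)"
| "rterm_pd i (TMul a b) = TAdd (TMul (rterm_pd i a) b) (TMul a (rterm_pd i b))"

lemma higher_deriv_radial_has_derivative:
  assumes "open U" "f holomorphic_on U" "x \<in> radial_domain U"
  shows "((\<lambda>y. (deriv ^^ n) f (radial_complex y)) has_derivative
           (\<lambda>h. (deriv ^^ Suc n) f (radial_complex x) * Complex (xc h 0) (vinner x h / vnorm x))) (at x)"
proof -
  have "((deriv ^^ n) f has_field_derivative (deriv ^^ Suc n) f (radial_complex x)) (at (radial_complex x))"
    using holomorphic_derivI[OF holomorphic_higher_deriv[OF assms(2,1)] assms(1)] assms(3)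
    by (simp add: radial_domain_def)
  then show ?thesis
    using radial_complex_has_derivative assms(3) unfolding has_field_derivative_def
    by (auto simp: radial_domain_def intro: has_derivative_compose)
qed

lemma rterm_has_derivative:
  assumes "open U" "f holomorphic_on U" "x \<in> radial_domain U"
  shows "(rterm_eval f e has_derivative (\<lambda>h. \<Sum>i<4. xc h i * rterm_eval f (rterm_pd i e) x)) (at x)"
proof (induction e)
  case (TCoord k)
  show ?case
  proof (cases "k < 4")
    case True
    then have "k = 0 \<or> k = 1 \<or> k = 2 \<or> k = 3" by auto
    then show ?thesis
      by (elim disjE) (auto simp: sum_lessThan_4 intro!: has_derivative_eq_rhs[OF xc_has_derivative])
  qed (auto simp: sum_lessThan_4)
next
  case TInvNorm
  have "vnorm x \<noteq> 0"
    using assms(3) by (simp add: radial_domain_def)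
  then show ?case
    by (auto simp: sum_lessThan_4 vinner_def field_simps power3_eq_cube
        intro!: has_derivative_eq_rhs[OF inverse_vnorm_has_derivative])
next
  case (TRe n)
  show ?case
    using assms(3)
    by (auto simp: sum_lessThan_4 vinner_def field_simps radial_domain_def
        intro!: has_derivative_eq_rhs[OF has_derivative_Re[OF higher_deriv_radial_has_derivative[OF assms]]])
next
  case (TIm n)
  show ?case
    using assms(3)
    by (auto simp: sum_lessThan_4 vinner_def field_simps radial_domain_def
        intro!: has_derivative_eq_rhs[OF has_derivative_Im[OF higher_deriv_radial_has_derivative[OF assms]]])
next
  case (TAdd a b)
  then show ?case
    by (auto intro!: has_derivative_eq_rhs[OF has_derivative_add] simp: sum.distrib algebra_simps)
next
  case (TMul a b)
  then show ?case
    by (auto intro!: has_derivative_eq_rhs[OF has_derivative_mult]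
        simp: sum.distrib algebra_simps sum_distrib_left sum_distrib_right)
qed simp

lemma represented_has_derivative:
  assumes "open U" "f holomorphic_on U" "\<forall>y\<in>radial_domain U. g y = rterm_eval f e y"
    and "x \<in> radial_domain U"
  shows "(g has_derivative (\<lambda>h. \<Sum>i<4. xc h i * rterm_eval f (rterm_pd i e) x)) (at x)"
  using rterm_has_derivative[OF assms(1,2,4)] open_radial_domain[OF assms(1)] assms(4)
  by (rule has_derivative_transform_within_open) (simp add: assms(3))

lemma pd_represented:
  assumes "open U" "f holomorphic_on U" "\<forall>y\<in>radial_domain U. g y = rterm_eval f e y"
    and "x \<in> radial_domain U" "i < 4"
  shows "pd i g x = rterm_eval f (rterm_pd i e) x"
  using pd_eq_has_derivative[OF represented_has_derivative[OF assms(1-4)]] assms(5)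
  by (simp add: xc_unit4 if_distrib[of "\<lambda>c. c * _"] cong: if_cong)

lemma diff3_on_represented:
  assumes "open U" "f holomorphic_on U" "\<forall>y\<in>radial_domain U. g y = rterm_eval f e y"
  shows "diff3_on g (radial_domain U)"
proof -
  have pd1: "\<forall>y\<in>radial_domain U. pd i g y = rterm_eval f (rterm_pd i e) y" if "i < 4" for i
    using pd_represented[OF assms] that by blast
  have pd2: "\<forall>y\<in>radial_domain U. pd j (pd i g) y = rterm_eval f (rterm_pd j (rterm_pd i e)) y"
    if "i < 4" "j < 4" for i j
    using pd_represented[OF assms(1,2) pd1] that by blast
  have "h differentiable (at y)" if "\<forall>y\<in>radial_domain U. h y = rterm_eval f e' y" "y \<in> radial_domain U"
    for h e' y
    using represented_has_derivative[OF assms(1,2) that] by (rule differentiableI)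
  then show ?thesis
    unfolding diff3_on_def differentiable_on_eq_differentiable_at[OF open_radial_domain[OF assms(1)]]
    using assms(3) pd1 pd2 by blast
qed

definition rterm_lap :: "rterm \<Rightarrow> rterm" where
  "rterm_lap e = TAdd (rterm_pd 0 (rterm_pd 0 e))
     (TAdd (rterm_pd 1 (rterm_pd 1 e)) (TAdd (rterm_pd 2 (rterm_pd 2 e)) (rterm_pd 3 (rterm_pd 3 e))))"

lemma lap_represented:
  assumes "open U" "f holomorphic_on U" "\<forall>y\<in>radial_domain U. g y = rterm_eval f e y"
    and "x \<in> radial_domain U"
  shows "(\<Sum>i<4. pd i (pd i g) x) = rterm_eval f (rterm_lap e) x"
proof -
  have "\<forall>y\<in>radial_domain U. pd i g y = rterm_eval f (rterm_pd i e) y" if "i < 4" for i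
    using pd_represented[OF assms(1-3)] that by blast
  then have "pd i (pd i g) x = rterm_eval f (rterm_pd i (rterm_pd i e)) x" if "i < 4" for i
    using pd_represented[OF assms(1,2)] assms(4) that by blast
  then show ?thesis
    by (simp add: sum_lessThan_4 rterm_lap_def)
qed

definition axial_term :: "rterm \<Rightarrow> rterm \<Rightarrow> nat set \<Rightarrow> rterm" where
  "axial_term a b A =
     (if A = {} then a
      else if A = {1} then TMul (TCoord 1) b
      else if A = {2} then TMul (TCoord 2) b
      else if A = {3} then TMul (TCoord 3) b
      else TConst 0)"

definition lap_scalar_term :: rterm where
  "lap_scalar_term = TMul (TConst (-2)) (TMul TInvNorm (TIm 1))"

definition lap_vector_term :: rterm where
  "lap_vector_term = TMul (TConst 2)
     (TAdd (TMul TInvNorm (TMul TInvNorm (TRe 1)))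
           (TMul (TConst (-1)) (TMul TInvNorm (TMul TInvNorm (TMul TInvNorm (TIm 0))))))"

(* Below, 1/|x| is kept atomic by removing rterm_eval.simps(3) from the simp set, so that the
   identities are polynomial and algebra can reduce them modulo this relation. *)
lemma rterm_eval_inv_norm_square:
  "vnorm y \<noteq> 0 \<Longrightarrow> (rterm_eval f TInvNorm y)\<^sup>2 * ((xc y 1)\<^sup>2 + (xc y 2)\<^sup>2 + (xc y 3)\<^sup>2) = 1"
  unfolding vnorm_square[symmetric] by (simp add: power_divide)

lemma rterm_lap_scalar:
  assumes "vnorm y \<noteq> 0"
  shows "rterm_eval f (rterm_lap (TRe 0)) y = rterm_eval f lap_scalar_term y"
  using rterm_eval_inv_norm_square[OF assms, where f = f]
  by (simp add: rterm_lap_def lap_scalar_term_def del: rterm_eval.simps(3)) algebra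

lemma rterm_lap_vector:
  assumes "vnorm y \<noteq> 0" "j \<in> {1, 2, 3}"
  shows "rterm_eval f (rterm_lap (TMul (TCoord j) (TMul TInvNorm (TIm 0)))) y
       = rterm_eval f (TMul (TCoord j) lap_vector_term) y"
proof -
  note inv_norm = rterm_eval_inv_norm_square[OF assms(1), where f = f]
  from assms(2) consider "j = 1" | "j = 2" | "j = 3"
    by blast
  then show ?thesis
  proof cases
    case 1
    show ?thesis
      using inv_norm unfolding 1
      by (simp add: rterm_lap_def lap_vector_term_def del: rterm_eval.simps(3)) algebra
  next
    case 2
    show ?thesis
      using inv_norm unfolding 2
      by (simp add: rterm_lap_def lap_vector_term_def del: rterm_eval.simps(3)) algebra
  next
    case 3
    show ?thesis
      using inv_norm unfolding 3
      by (simp add: rterm_lap_def lap_vector_term_def del: rterm_eval.simps(3)) algebra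
  qed
qed

lemma rterm_lap_axial:
  assumes "vnorm y \<noteq> 0"
  shows "rterm_eval f (rterm_lap (axial_term (TRe 0) (TMul TInvNorm (TIm 0)) A)) y
       = rterm_eval f (axial_term lap_scalar_term lap_vector_term A) y"
  using rterm_lap_scalar[OF assms] rterm_lap_vector[OF assms, of 1] rterm_lap_vector[OF assms, of 2]
    rterm_lap_vector[OF assms, of 3]
  by (simp add: axial_term_def rterm_lap_def[of "TConst 0"])

lemma lap_terms_scalar_part:
  assumes "vnorm y \<noteq> 0"
  shows "rterm_eval f (rterm_pd 0 lap_scalar_term) y
       = (\<Sum>j\<in>{1, 2, 3}. rterm_eval f (rterm_pd j (TMul (TCoord j) lap_vector_term)) y)"
  using rterm_eval_inv_norm_square[OF assms, where f = f]
  by (simp add: lap_scalar_term_def lap_vector_term_def del: rterm_eval.simps(3)) algebra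

lemma lap_terms_vector_part:
  "k \<in> {1, 2, 3} \<Longrightarrow>
   rterm_eval f (rterm_pd 0 (TMul (TCoord k) lap_vector_term)) y
   + rterm_eval f (rterm_pd k lap_scalar_term) y = 0"
  by (auto simp: lap_scalar_term_def lap_vector_term_def algebra_simps)

lemma lap_terms_bivector_part:
  "k \<in> {1, 2, 3} \<Longrightarrow> l \<in> {1, 2, 3} \<Longrightarrow>
   rterm_eval f (rterm_pd k (TMul (TCoord l) lap_vector_term)) y
   = rterm_eval f (rterm_pd l (TMul (TCoord k) lap_vector_term)) y"
  by (auto simp: lap_vector_term_def algebra_simps)

lemma Dop_lap_axial_eq_0:
  assumes "vnorm x \<noteq> 0" "C \<in> blades"
    and vanish: "\<And>y A. A \<in> blades \<Longrightarrow> 2 \<le> card A \<Longrightarrow> G y A = 0"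
    and pd_G: "\<And>i A. i < 4 \<Longrightarrow>
      pd i (\<lambda>y. G y A) x = rterm_eval f (rterm_pd i (axial_term lap_scalar_term lap_vector_term A)) x"
  shows "Dop G x C = 0"
proof -
  have "C = {} \<or> C \<in> {{1}, {2}, {3}} \<or> C \<in> {{1, 2}, {1, 3}, {2, 3}} \<or> C = {1, 2, 3}"
    using assms(2) by (simp add: blades_eq)
  then show ?thesis
  proof (elim disjE)
    assume "C = {}"
    then show ?thesis
      using lap_terms_scalar_part[OF assms(1), where f = f]
      by (simp add: Dop_paravector_scalar[OF vanish] pd_G axial_term_def)
  next
    assume "C \<in> {{1}, {2}, {3}}"
    then show ?thesis
      using lap_terms_vector_part[of 1 f x] lap_terms_vector_part[of 2 f x]
        lap_terms_vector_part[of 3 f x]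
      by (auto simp: Dop_paravector_vector[OF vanish] pd_G axial_term_def)
  next
    assume "C \<in> {{1, 2}, {1, 3}, {2, 3}}"
    then show ?thesis
      using lap_terms_bivector_part[of 1 2 f x] lap_terms_bivector_part[of 1 3 f x]
        lap_terms_bivector_part[of 2 3 f x]
      by (auto simp: Dop_paravector_bivector[OF vanish] pd_G axial_term_def)
  next
    assume "C = {1, 2, 3}"
    then show ?thesis
      using Dop_paravector_trivector[OF vanish] by simp
  qed
qed

lemma holomorphic_cliffordian_axial:
  assumes "open U" "f holomorphic_on U"
    and F: "\<And>y A. F y A = rterm_eval f (axial_term (TRe 0) (TMul TInvNorm (TIm 0)) A) y"
  shows "holomorphic_cliffordian F (radial_domain U)"
proof -
  have lapF:
    "\<forall>y\<in>radial_domain U. lap F y A = rterm_eval f (axial_term lap_scalar_term lap_vector_term A) y"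
    for A
  proof
    fix y
    assume y: "y \<in> radial_domain U"
    have "lap F y A = (\<Sum>i<4. pd i (pd i (\<lambda>y. F y A)) y)"
      by (simp add: lap_def)
    also have "\<dots> = rterm_eval f (rterm_lap (axial_term (TRe 0) (TMul TInvNorm (TIm 0)) A)) y"
      by (rule lap_represented[OF assms(1,2) _ y]) (simp add: F)
    also have "\<dots> = rterm_eval f (axial_term lap_scalar_term lap_vector_term A) y"
      using y by (simp add: rterm_lap_axial radial_domain_def)
    finally show "lap F y A = rterm_eval f (axial_term lap_scalar_term lap_vector_term A) y" .
  qed
  have "F y A = 0" if "A \<in> blades" "2 \<le> card A" for y A
    using that by (auto simp: F axial_term_def)
  then have lapF_vanish: "lap F y A = 0" if "A \<in> blades" "2 \<le> card A" for y A
    using that by (simp add: lap_def)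
  have "Dop (lap F) x C = 0" if "x \<in> radial_domain U" "C \<in> blades" for x C
    using that lapF_vanish pd_represented[OF assms(1,2) lapF that(1)]
    by (intro Dop_lap_axial_eq_0[where f = f]) (auto simp: radial_domain_def)
  moreover have "diff3_on (\<lambda>y. F y A) (radial_domain U)" for A
    by (rule diff3_on_represented[OF assms(1,2),
          where e = "axial_term (TRe 0) (TMul TInvNorm (TIm 0)) A"]) (simp add: F)
  ultimately show ?thesis
    by (simp add: holomorphic_cliffordian_def)
qed

theorem lemma2:
  fixes U :: "complex set" and f :: "complex \<Rightarrow> complex"
  assumes "open U" and "f holomorphic_on U"
  shows "holomorphic_cliffordian
           (\<lambda>x. (\<lambda>A. (if A = {} then Re (f (Complex (xc x 0) (vnorm x))) else 0)
                   + (\<Sum>j\<in>{1,2,3}. (xc x j / vnorm x) * ebasis j A)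
                       * Im (f (Complex (xc x 0) (vnorm x)))))
           {x. vnorm x \<noteq> 0 \<and> Complex (xc x 0) (vnorm x) \<in> U}"
proof -
  have "{x. vnorm x \<noteq> 0 \<and> Complex (xc x 0) (vnorm x) \<in> U} = radial_domain U"
    by (simp add: radial_domain_def radial_complex_def)
  moreover have "(if A = {} then Re (f (Complex (xc y 0) (vnorm y))) else 0)
      + (\<Sum>j\<in>{1,2,3}. (xc y j / vnorm y) * ebasis j A) * Im (f (Complex (xc y 0) (vnorm y)))
      = rterm_eval f (axial_term (TRe 0) (TMul TInvNorm (TIm 0)) A) y" for y A
    by (auto simp: axial_term_def ebasis_def bset_def radial_complex_def)
  ultimately show ?thesis
    using holomorphic_cliffordian_axial[OF assms] by simp
qed

end
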